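(* Let $G$ be a graph, $X\subseteq V(G)$ with $F:=G-X$ a pseudoforest, and $k$ an integer. Suppose there are distinct $u,v,w\in X$ such that $\{u,v,w\}$ is independent in $G$, $\mathrm{Conf}_F(\{u,v,w\}) \ge |X|$, and there is no anchor triangle $P$ with $N_G(V(P))=\{u,v,w\}$. Let $G'$ be obtained from $G$ by adding three new vertices $p_u,p_v,p_w$ and the edges $p_up_v, p_up_w, p_vp_w, p_uu, p_vv, p_ww$, and let $k' := k+1$. Then $G$ has an independent set of size at least $k$ if and only if $G'$ has an independent set of size at least $k'$.
   Context: All graphs are finite, simple and undirected; a pseudoforest is a graph each of whose connected components contains at most one cycle. $\alpha(H)$ is the independence number of $H$. For a subgraph $F'\subseteq F$ and $X'\subseteq X$, the number of conflicts is $\mathrm{Conf}_{F'}(X') := \alpha(F') - \alpha(F' - N_G(X'))$, where $N_G(X')$ is the set of vertices outside $X'$ adjacent to some vertex of $X'$. An anchor triangle is a connected component $P$ of $F=G-X$ with $V(P)=\{p_1,p_2,p_3\}$ such that there are vertices $x_1,x_2,x_3\in X$ with $N_G(p_1)=\{p_2,p_3,x_1\}$, $N_G(p_2)=\{p_1,p_3,x_2\}$, $N_G(p_3)=\{p_1,p_2,x_3\}$. *)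

theory Defs
  imports Main
begin

text \<open>A finite simple undirected graph: a vertex set and a set of 2-element edges.\<close>
type_synonym 'a graph = "'a set \<times> 'a set set"

definition verts :: "'a graph \<Rightarrow> 'a set" where "verts G = fst G"
definition edges :: "'a graph \<Rightarrow> 'a set set" where "edges G = snd G"

definition wf_graph :: "'a graph \<Rightarrow> bool" where
  "wf_graph G \<longleftrightarrow> finite (verts G) \<and>
     (\<forall>e\<in>edges G. \<exists>x y. x \<noteq> y \<and> x \<in> verts G \<and> y \<in> verts G \<and> e = {x, y})"

definition adj :: "'a graph \<Rightarrow> 'a \<Rightarrow> 'a \<Rightarrow> bool" where
  "adj G x y \<longleftrightarrow> {x, y} \<in> edges G"

definition induced :: "'a graph \<Rightarrow> 'a set \<Rightarrow> 'a graph" where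
  "induced G S = (verts G \<inter> S, {e \<in> edges G. e \<subseteq> S})"

definition delete :: "'a graph \<Rightarrow> 'a set \<Rightarrow> 'a graph" where
  "delete G S = induced G (verts G - S)"

definition nbhd :: "'a graph \<Rightarrow> 'a set \<Rightarrow> 'a set" where
  "nbhd G S = {y \<in> verts G - S. \<exists>x\<in>S. adj G x y}"

definition indep :: "'a graph \<Rightarrow> 'a set \<Rightarrow> bool" where
  "indep G I \<longleftrightarrow> I \<subseteq> verts G \<and> (\<forall>x\<in>I. \<forall>y\<in>I. \<not> adj G x y)"

definition alpha :: "'a graph \<Rightarrow> nat" where
  "alpha G = Max {card I | I. indep G I}"

definition conf :: "'a graph \<Rightarrow> 'a graph \<Rightarrow> 'a set \<Rightarrow> int" where
  "conf G F' X' = int (alpha F') - int (alpha (delete F' (nbhd G X')))"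

definition reach :: "'a graph \<Rightarrow> 'a \<Rightarrow> 'a \<Rightarrow> bool" where
  "reach G x y \<longleftrightarrow> x \<in> verts G \<and> (\<lambda>a b. adj G a b)\<^sup>*\<^sup>* x y"

definition component :: "'a graph \<Rightarrow> 'a set \<Rightarrow> bool" where
  "component G C \<longleftrightarrow> (\<exists>x\<in>verts G. C = {y. reach G x y})"

text \<open>Cycles, given as lists of distinct vertices of length at least 3;
  a cycle (as a subgraph) is identified by its edge set.\<close>
definition is_cycle :: "'a graph \<Rightarrow> 'a list \<Rightarrow> bool" where
  "is_cycle G xs \<longleftrightarrow> length xs \<ge> 3 \<and> distinct xs \<and> set xs \<subseteq> verts G \<and>
     (\<forall>i < length xs. adj G (xs ! i) (xs ! ((i + 1) mod length xs)))"

definition cycle_edges :: "'a list \<Rightarrow> 'a set set" where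
  "cycle_edges xs = {{xs ! i, xs ! ((i + 1) mod length xs)} | i. i < length xs}"

definition pseudoforest :: "'a graph \<Rightarrow> bool" where
  "pseudoforest G \<longleftrightarrow> (\<forall>C. component G C \<longrightarrow>
     (\<forall>xs ys. is_cycle G xs \<and> is_cycle G ys \<and> set xs \<subseteq> C \<and> set ys \<subseteq> C
        \<longrightarrow> cycle_edges xs = cycle_edges ys))"

definition anchor_triangle :: "'a graph \<Rightarrow> 'a set \<Rightarrow> 'a set \<Rightarrow> bool" where
  "anchor_triangle G X P \<longleftrightarrow> component (delete G X) P \<and>
     (\<exists>p1 p2 p3 x1 x2 x3. P = {p1, p2, p3} \<and> p1 \<noteq> p2 \<and> p1 \<noteq> p3 \<and> p2 \<noteq> p3 \<and>
        x1 \<in> X \<and> x2 \<in> X \<and> x3 \<in> X \<and>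
        nbhd G {p1} = {p2, p3, x1} \<and> nbhd G {p2} = {p1, p3, x2} \<and> nbhd G {p3} = {p1, p2, x3})"

definition add_triangle :: "'a graph \<Rightarrow> 'a \<Rightarrow> 'a \<Rightarrow> 'a \<Rightarrow> 'a \<Rightarrow> 'a \<Rightarrow> 'a \<Rightarrow> 'a graph" where
  "add_triangle G u v w pu pv pw =
     (verts G \<union> {pu, pv, pw},
      edges G \<union> {{pu, pv}, {pu, pw}, {pv, pw}, {pu, u}, {pv, v}, {pw, w}})"

end

theory Submission
  imports Defs
begin

text \<open>An independent set of \<open>G\<close> missing one of \<open>u, v, w\<close> grows by the
  corresponding new vertex. If it contains all three, its part outside \<open>X\<close> is
  independent in \<open>F - N(u,v,w)\<close>, so its size is at most
  \<open>\<alpha>(F - N(u,v,w)) + |X| \<le> \<alpha>(F)\<close> by the conflict bound; a maximum independent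
  set of \<open>F\<close> avoids \<open>X\<close> and can be extended by \<open>pu\<close> instead. Conversely, an
  independent set of \<open>G'\<close> meets the triangle \<open>pu pv pw\<close> in at most one vertex.\<close>

lemma finite_indep_cards:
  assumes "finite (verts H)"
  shows "finite {card I | I. indep H I}"
proof (rule finite_subset)
  show "{card I | I. indep H I} \<subseteq> {..card (verts H)}"
    using assms by (auto simp: indep_def intro: card_mono)
qed simp

lemma card_le_alpha:
  assumes "finite (verts H)" "indep H I"
  shows "card I \<le> alpha H"
  unfolding alpha_def using assms by (intro Max_ge[OF finite_indep_cards]) blast+

lemma ex_indep_card_alpha:
  assumes "finite (verts H)"
  obtains J where "indep H J" "card J = alpha H"
proof -
  have "indep H {}" by (simp add: indep_def)
  then have "{card I | I. indep H I} \<noteq> {}" by auto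
  then have "alpha H \<in> {card I | I. indep H I}"
    unfolding alpha_def by (rule Max_in[OF finite_indep_cards[OF assms]])
  then obtain J where "indep H J" "card J = alpha H" by auto
  then show thesis by (rule that)
qed

lemma verts_delete: "verts (delete G S) = verts G - S"
  by (auto simp: delete_def induced_def verts_def)

lemma adj_delete_iff: "adj (delete G S) x y \<longleftrightarrow> adj G x y \<and> x \<in> verts G - S \<and> y \<in> verts G - S"
  by (auto simp: delete_def induced_def adj_def edges_def verts_def)

lemma indep_delete_iff: "indep (delete G S) I \<longleftrightarrow> indep G I \<and> I \<inter> S = {}"
  by (auto simp: indep_def verts_delete adj_delete_iff)

lemma indep_diff: "indep G I \<Longrightarrow> indep G (I - A)"
  by (auto simp: indep_def)

lemma indep_delete_nbhd:
  assumes "indep G I" "S \<subseteq> I"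
  shows "indep (delete (delete G X) (nbhd G S)) (I - X)"
proof -
  have "(I - X) \<inter> nbhd G S = {}"
    using assms by (auto simp: nbhd_def indep_def)
  then show ?thesis
    using indep_diff[OF assms(1)] by (auto simp: indep_delete_iff)
qed

lemma card_le_card_diff_plus_card_Int: "card I \<le> card (I - A) + card (I \<inter> A)"
proof -
  have "card I = card ((I - A) \<union> (I \<inter> A))" by (simp add: Un_Diff_Int)
  also have "\<dots> \<le> card (I - A) + card (I \<inter> A)" by (rule card_Un_le)
  finally show ?thesis .
qed

lemma card_le_alpha_delete_if_conf_ge:
  assumes "finite (verts G)" "finite X"
    and "indep G I" "S \<subseteq> I"
    and "conf G (delete G X) S \<ge> int (card X)"
  shows "card I \<le> alpha (delete G X)"
proof -
  let ?F' = "delete (delete G X) (nbhd G S)"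
  have "card (I - X) \<le> alpha ?F'"
    using assms(1) by (intro card_le_alpha indep_delete_nbhd[OF assms(3,4)]) (simp add: verts_delete)
  moreover have "card (I \<inter> X) \<le> card X"
    using assms(2) by (simp add: card_mono)
  moreover have "card I \<le> card (I - X) + card (I \<inter> X)"
    by (rule card_le_card_diff_plus_card_Int)
  ultimately show ?thesis
    using assms(5) by (simp add: conf_def)
qed

lemma ex_indep_not_superset_if_conf_ge:
  assumes "finite (verts G)" "finite X"
    and "indep G I" "S \<inter> X \<noteq> {}"
    and "conf G (delete G X) S \<ge> int (card X)"
  obtains J where "indep G J" "card I \<le> card J" "\<not> S \<subseteq> J"
proof (cases "S \<subseteq> I")
  case True
  have "finite (verts (delete G X))"
    using assms(1) by (simp add: verts_delete)
  then obtain J where "indep (delete G X) J" "card J = alpha (delete G X)"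
    by (rule ex_indep_card_alpha)
  moreover have "card I \<le> alpha (delete G X)"
    using card_le_alpha_delete_if_conf_ge[OF assms(1-3) True assms(5)] .
  ultimately show thesis
    using assms(4) by (intro that[of J]) (auto simp: indep_delete_iff)
next
  case False
  then show thesis using assms(3) by (intro that[of I]) auto
qed

lemma add_triangle_swap12:
  "add_triangle G v u w pv pu pw = add_triangle G u v w pu pv pw"
  by (auto simp: add_triangle_def insert_commute)

lemma add_triangle_swap13:
  "add_triangle G w v u pw pv pu = add_triangle G u v w pu pv pw"
  by (auto simp: add_triangle_def insert_commute)

lemma verts_add_triangle:
  "verts (add_triangle G u v w pu pv pw) = verts G \<union> {pu, pv, pw}"
  by (simp add: add_triangle_def verts_def)

lemma adj_add_triangle_iff:
  "adj (add_triangle G u v w pu pv pw) x y \<longleftrightarrow>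
     adj G x y \<or> {x, y} \<in> {{pu, pv}, {pu, pw}, {pv, pw}, {pu, u}, {pv, v}, {pw, w}}"
  unfolding adj_def add_triangle_def edges_def by (simp add: disj_ac)

lemma indep_add_triangle_insert:
  assumes "wf_graph G" "indep G I" "u \<notin> I" "u \<in> verts G"
    and "pu \<notin> verts G" "pv \<notin> verts G" "pw \<notin> verts G" "pu \<noteq> pv" "pu \<noteq> pw"
  shows "indep (add_triangle G u v w pu pv pw) (insert pu I)"
  unfolding indep_def
proof (intro conjI ballI notI)
  have I_verts: "I \<subseteq> verts G" using assms(2) by (simp add: indep_def)
  then show "insert pu I \<subseteq> verts (add_triangle G u v w pu pv pw)"
    by (auto simp: verts_add_triangle)
  fix x y assume x: "x \<in> insert pu I" and y: "y \<in> insert pu I"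
    and "adj (add_triangle G u v w pu pv pw) x y"
  then consider "adj G x y" | "{x, y} \<in> {{pu, pv}, {pu, pw}, {pv, pw}, {pu, u}, {pv, v}, {pw, w}}"
    by (auto simp: adj_add_triangle_iff)
  then show False
  proof cases
    case 1
    then have "x \<in> verts G" "y \<in> verts G"
      using assms(1) by (fastforce simp: wf_graph_def adj_def doubleton_eq_iff)+
    then have "x \<in> I" "y \<in> I" using x y assms(5) by auto
    with 1 show False using assms(2) by (auto simp: indep_def)
  next
    case 2
    have "pv \<notin> insert pu I" "pw \<notin> insert pu I" "u \<notin> insert pu I"
      using I_verts assms(3-9) by auto
    with 2 x y show False by (auto simp: doubleton_eq_iff)
  qed
qed

lemma indep_add_triangle_grow:
  assumes "wf_graph G" "indep G I" "\<not> {u, v, w} \<subseteq> I" "{u, v, w} \<subseteq> verts G"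
    and "pu \<notin> verts G" "pv \<notin> verts G" "pw \<notin> verts G"
    and "pu \<noteq> pv" "pu \<noteq> pw" "pv \<noteq> pw"
  shows "\<exists>J. indep (add_triangle G u v w pu pv pw) J \<and> card J = card I + 1"
proof -
  have "I \<subseteq> verts G" using assms(2) by (simp add: indep_def)
  moreover from this have "finite I"
    using assms(1) by (simp add: wf_graph_def finite_subset)
  ultimately have card_insert: "card (insert p I) = card I + 1" if "p \<notin> verts G" for p
    using that by (auto simp: card_insert_if)
  have uvw: "u \<in> verts G" "v \<in> verts G" "w \<in> verts G" using assms(4) by auto
  consider "u \<notin> I" | "v \<notin> I" | "w \<notin> I" using assms(3) by blast
  then show ?thesis
  proof cases
    case 1
    have "indep (add_triangle G u v w pu pv pw) (insert pu I)"
      using indep_add_triangle_insert[OF assms(1,2) 1 uvw(1) assms(5-9)] .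
    with card_insert[OF assms(5)] show ?thesis by auto
  next
    case 2
    have "indep (add_triangle G u v w pu pv pw) (insert pv I)"
      using indep_add_triangle_insert[OF assms(1,2) 2 uvw(2) assms(6,5,7) not_sym[OF assms(8)] assms(10)]
      by (simp only: add_triangle_swap12)
    with card_insert[OF assms(6)] show ?thesis by auto
  next
    case 3
    have "indep (add_triangle G u v w pu pv pw) (insert pw I)"
      using indep_add_triangle_insert[OF assms(1,2) 3 uvw(3) assms(7,6,5) not_sym[OF assms(10)] not_sym[OF assms(9)]]
      by (simp only: add_triangle_swap13)
    with card_insert[OF assms(7)] show ?thesis by auto
  qed
qed

lemma card_indep_Int_clique_le_1:
  assumes "indep H I" "\<And>a b. a \<in> C \<Longrightarrow> b \<in> C \<Longrightarrow> a \<noteq> b \<Longrightarrow> adj H a b"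
  shows "card (I \<inter> C) \<le> 1"
proof (cases "finite (I \<inter> C)")
  case True
  have "a = b" if "a \<in> I \<inter> C" "b \<in> I \<inter> C" for a b
    using that assms by (meson IntD1 IntD2 indep_def)
  with True show ?thesis by (simp add: card_le_Suc0_iff_eq)
qed simp

lemma indep_add_triangle_shrink:
  assumes "indep (add_triangle G u v w pu pv pw) I"
  shows "\<exists>J. indep G J \<and> card I \<le> card J + 1"
proof -
  let ?T = "{pu, pv, pw}"
  have "adj (add_triangle G u v w pu pv pw) a b" if "a \<in> ?T" "b \<in> ?T" "a \<noteq> b" for a b
    using that by (elim insertE emptyE) (simp_all add: adj_add_triangle_iff insert_commute)
  then have "card (I \<inter> ?T) \<le> 1"
    using assms card_indep_Int_clique_le_1 by blast
  moreover have "card I \<le> card (I - ?T) + card (I \<inter> ?T)"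
    by (rule card_le_card_diff_plus_card_Int)
  moreover have "indep G (I - ?T)"
    using assms by (auto simp: indep_def verts_add_triangle adj_add_triangle_iff)
  ultimately show ?thesis by (intro exI[of _ "I - ?T"]) simp
qed

theorem lemma3:
  fixes G :: "'a graph" and X :: "'a set" and k :: int
    and u v w pu pv pw :: 'a
  assumes "wf_graph G"
    and "X \<subseteq> verts G"
    and "pseudoforest (delete G X)"
    and "u \<in> X" "v \<in> X" "w \<in> X" "u \<noteq> v" "u \<noteq> w" "v \<noteq> w"
    and "indep G {u, v, w}"
    and "conf G (delete G X) {u, v, w} \<ge> int (card X)"
    and "\<not> (\<exists>P. anchor_triangle G X P \<and> nbhd G P = {u, v, w})"
    and "pu \<notin> verts G" "pv \<notin> verts G" "pw \<notin> verts G"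
    and "pu \<noteq> pv" "pu \<noteq> pw" "pv \<noteq> pw"
  shows "(\<exists>I. indep G I \<and> int (card I) \<ge> k) \<longleftrightarrow>
         (\<exists>I. indep (add_triangle G u v w pu pv pw) I \<and> int (card I) \<ge> k + 1)"
proof
  assume "\<exists>I. indep G I \<and> int (card I) \<ge> k"
  then obtain I where I: "indep G I" "int (card I) \<ge> k" by blast
  have finV: "finite (verts G)" using assms(1) by (simp add: wf_graph_def)
  have finX: "finite X" using finite_subset[OF assms(2) finV] .
  have "{u, v, w} \<inter> X \<noteq> {}" using assms(4) by blast
  then obtain J where J: "indep G J" "card I \<le> card J" "\<not> {u, v, w} \<subseteq> J"
    by (rule ex_indep_not_superset_if_conf_ge[OF finV finX I(1) _ assms(11)])
  have "{u, v, w} \<subseteq> verts G"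
    using assms(2,4-6) by blast
  then obtain K where "indep (add_triangle G u v w pu pv pw) K" "card K = card J + 1"
    using indep_add_triangle_grow[OF assms(1) J(1,3) _ assms(13-18)] by blast
  with I(2) J(2) show "\<exists>I. indep (add_triangle G u v w pu pv pw) I \<and> int (card I) \<ge> k + 1"
    by (intro exI[of _ K]) simp
next
  assume "\<exists>I. indep (add_triangle G u v w pu pv pw) I \<and> int (card I) \<ge> k + 1"
  then obtain I where "indep (add_triangle G u v w pu pv pw) I" "int (card I) \<ge> k + 1"
    by blast
  moreover obtain J where "indep G J" "card I \<le> card J + 1"
    using indep_add_triangle_shrink[OF calculation(1)] by blast
  ultimately show "\<exists>I. indep G I \<and> int (card I) \<ge> k"
    by (intro exI[of _ J]) simp
qed

end
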